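(* In a two-player perfect-information game of depth $D$, let $\{\tilde U_s\}$ be learned EPFs with targets $\tilde U'_s$, and let $\tilde Q_s$ be the induced leader payoff functions, as in the context. Suppose $L_\infty(\tilde U_s,\tilde U'_s)\le\epsilon$ for all $s\in\mathcal S$. Then $|\tilde Q_s(\mu_2)-\tilde U_s(\mu_2)|\le\epsilon D$ for all $s\in\mathcal S$ and all $\mu_2\in[\underline V(s),\overline V(s)]$.
   Context: A two-player perfect-information game is a finite rooted tree with states $\mathcal S$. Its leaves $\mathcal L$ carry payoffs $r_1(\ell),r_2(\ell)$ for the leader $\mathsf P_1$ and the follower $\mathsf P_2$. Non-leaf states are partitioned into leader states $\mathcal S_1$ and follower states $\mathcal S_2$, and $\mathcal C(s)$ denotes the children of $s$. The depth $D$ is the maximum number of edges on a root-to-leaf path. Bounds, defined by backward induction: - $\underline V(\ell)=\overline V(\ell)=r_2(\ell)$ for leaves; - $\underline V(s)=\min_{s'}\underline V(s')$ for $s\in\mathcal S_1$; - $\underline V(s)=\max_{s'}\underline V(s')$ for $s\in\mathcal S_2$; - $\overline V(s)=\max_{s'}\overline V(s')$ for every non-leaf $s$. For $s\in\mathcal S_2$ and $s'\in\mathcal C(s)$, let $\tau(s')=\max_{s^!\in\mathcal C(s),s^!\ne s'}\underline V(s^!)$. Let $\beta(s')=\tau(s')$ if the parent of $s'$ is in $\mathcal S_2$, and $-\infty$ if it is in $\mathcal S_1$. Operators, for $g:\mathbb R\to\mathbb R\cup\{-\infty\}$: - $\bigwedge_i g_i$ is the pointwise infimum of all concave $h\ge\max_i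 g_i$; - $[g\triangleright t](\mu)=g(\mu)$ for $\mu\ge t$ and $-\infty$ otherwise. Learned EPFs: for a leaf, $\tilde U_\ell(\mu)=r_1(\ell)$ if $\mu=r_2(\ell)$ and $-\infty$ otherwise. For non-leaf $s$, $\tilde U_s$ is the piecewise linear interpolation of finitely many points with $x$-coordinates in $[\underline V(s),\overline V(s)]$ including both endpoints. It is real-valued there and $-\infty$ outside. Targets: $\tilde U'_s=\bigwedge_{s'\in\mathcal C(s)}(\tilde U_{s'}\triangleright\beta(s'))$ for non-leaf $s$, and $\tilde U'_\ell=\tilde U_\ell$. The loss is $L_\infty(f,g)=\sup_\mu|f(\mu)-g(\mu)|$, with $|(-\infty)-(-\infty)|=0$. Induced payoff $\tilde Q_s:[\underline V(s),\overline V(s)]\to\mathbb R$: for leaves, $\tilde Q_\ell(r_2(\ell))=r_1(\ell)$. For non-leaf $s$ and promise $\mu_2$, let $(\tilde s',\tilde s'',\tilde t,\tilde\mu',\tilde\mu'')$ be the chosen maximizer, over $s',s''\in\mathcal C(s)$, $t\in[0,1]$, $\mu',\mu''$ with $t\mu'+(1-t)\mu''=\mu_2$, of $t[\tilde U_{s'}\triangleright\beta(s')](\mu')+(1-t)[\tilde U_{s''}\triangleright\beta(s'')](\mu'')$. Then $$\tilde Q_s(\mu_2)=\tilde t\,\tilde Q_{\tilde s'}(\tilde\mu')+(1-\tilde t)\,\tilde Q_{\tilde s''}(\tilde\mu'').$$ Thus $\tilde Q_s(\mu_2)$ is the leader's expected payoff when play starts at $s$ with promise $\mu_2$ to the follower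 and proceeds by this one-step-lookahead rule (moving to $\tilde s'$ with probability $\tilde t$ and promise $\tilde\mu'$, and to $\tilde s''$ with probability $1-\tilde t$ and promise $\tilde\mu''$). *)

theory Defs
  imports "HOL-Analysis.Analysis" "HOL-Library.Extended_Real"
begin

text \<open>A leaf carries the payoffs (r1, r2) for leader and
  follower. An inner node carries a flag: True = leader state (S1), False = follower
  state (S2), and its list of children.\<close>

datatype gtree = Leaf real real | Node bool "gtree list"

fun wf_tree :: "gtree \<Rightarrow> bool" where
  "wf_tree (Leaf _ _) = True"
| "wf_tree (Node _ ts) = (ts \<noteq> [] \<and> (\<forall>t\<in>set ts. wf_tree t))"

text \<open>States are positions (paths of child indices from the root).\<close>
fun sub :: "gtree \<Rightarrow> nat list \<Rightarrow> gtree option" where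
  "sub t [] = Some t"
| "sub (Leaf _ _) (i # p) = None"
| "sub (Node b ts) (i # p) = (if i < length ts then sub (ts ! i) p else None)"

fun depth :: "gtree \<Rightarrow> nat" where
  "depth (Leaf _ _) = 0"
| "depth (Node _ ts) = Suc (foldr max (map depth ts) 0)"

fun vlo :: "gtree \<Rightarrow> real" where
  "vlo (Leaf r1 r2) = r2"
| "vlo (Node b ts) = (if b then Min (set (map vlo ts)) else Max (set (map vlo ts)))"

fun vhi :: "gtree \<Rightarrow> real" where
  "vhi (Leaf r1 r2) = r2"
| "vhi (Node b ts) = Max (set (map vhi ts))"

text \<open>tau for child i of a follower node with children ts: maximum of the lower bounds
  of the other children (maximum over the empty set = -\<infinity>).\<close>
definition tau :: "gtree list \<Rightarrow> nat \<Rightarrow> ereal" where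
  "tau ts i = (SUP j \<in> {j. j < length ts \<and> j \<noteq> i}. ereal (vlo (ts ! j)))"

definition beta :: "bool \<Rightarrow> gtree list \<Rightarrow> nat \<Rightarrow> ereal" where
  "beta b ts i = (if b then -\<infinity> else tau ts i)"

definition trunc :: "(real \<Rightarrow> ereal) \<Rightarrow> ereal \<Rightarrow> real \<Rightarrow> ereal" where
  "trunc g t \<mu> = (if ereal \<mu> \<ge> t then g \<mu> else -\<infinity>)"

definition concave_ext :: "(real \<Rightarrow> ereal) \<Rightarrow> bool" where
  "concave_ext h \<longleftrightarrow> (\<forall>x. h x \<noteq> \<infinity>) \<and>
     (\<forall>x y t. 0 \<le> t \<and> t \<le> 1 \<longrightarrow>
        ereal t * h x + ereal (1 - t) * h y \<le> h (t * x + (1 - t) * y))"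

definition env :: "(real \<Rightarrow> ereal) set \<Rightarrow> real \<Rightarrow> ereal" where
  "env G \<mu> = (INF h \<in> {h. concave_ext h \<and> (\<forall>g\<in>G. \<forall>x. g x \<le> h x)}. h \<mu>)"

text \<open>L-infinity loss, with |(-\<infinity>) - (-\<infinity>)| = 0.\<close>
definition linf :: "(real \<Rightarrow> ereal) \<Rightarrow> (real \<Rightarrow> ereal) \<Rightarrow> ereal" where
  "linf f g = (SUP \<mu>. if f \<mu> = g \<mu> then 0 else \<bar>f \<mu> - g \<mu>\<bar>)"

definition pl_epf :: "real \<Rightarrow> real \<Rightarrow> (real \<Rightarrow> ereal) \<Rightarrow> bool" where
  "pl_epf lo hi u \<longleftrightarrow>
     (\<exists>P f. finite P \<and> lo \<in> P \<and> hi \<in> P \<and> P \<subseteq> {lo..hi} \<and>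
        (\<forall>x. x \<notin> {lo..hi} \<longrightarrow> u x = -\<infinity>) \<and>
        (\<forall>x\<in>{lo..hi}. u x = ereal (f x)) \<and>
        (\<forall>a\<in>P. \<forall>b\<in>P. a < b \<and> {a<..<b} \<inter> P = {} \<longrightarrow>
            (\<forall>x\<in>{a..b}. f x = ((b - x) * f a + (x - a) * f b) / (b - a))))"

definition leaf_epf :: "real \<Rightarrow> real \<Rightarrow> real \<Rightarrow> ereal" where
  "leaf_epf r1 r2 \<mu> = (if \<mu> = r2 then ereal r1 else -\<infinity>)"

definition target :: "gtree \<Rightarrow> (nat list \<Rightarrow> real \<Rightarrow> ereal) \<Rightarrow> nat list \<Rightarrow> real \<Rightarrow> ereal" where
  "target T U p = (case sub T p of
      Some (Node b ts) \<Rightarrow> env {trunc (U (p @ [i])) (beta b ts i) | i. i < length ts}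
    | _ \<Rightarrow> U p)"

text \<open>A candidate (i, j, t, \<mu>', \<mu>''): move to child i w.p. t with promise \<mu>', to child j
  w.p. 1 - t with promise \<mu>''.\<close>
definition feasible :: "gtree list \<Rightarrow> real \<Rightarrow> nat \<times> nat \<times> real \<times> real \<times> real \<Rightarrow> bool" where
  "feasible ts \<mu> c = (case c of (i, j, t, m1, m2) \<Rightarrow>
     i < length ts \<and> j < length ts \<and> 0 \<le> t \<and> t \<le> 1 \<and> t * m1 + (1 - t) * m2 = \<mu>)"

definition cand_val :: "(nat list \<Rightarrow> real \<Rightarrow> ereal) \<Rightarrow> nat list \<Rightarrow> bool \<Rightarrow> gtree list \<Rightarrow>
    nat \<times> nat \<times> real \<times> real \<times> real \<Rightarrow> ereal" where
  "cand_val U p b ts c = (case c of (i, j, t, m1, m2) \<Rightarrow>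
     ereal t * trunc (U (p @ [i])) (beta b ts i) m1
     + ereal (1 - t) * trunc (U (p @ [j])) (beta b ts j) m2)"

definition is_maximizer :: "(nat list \<Rightarrow> real \<Rightarrow> ereal) \<Rightarrow> nat list \<Rightarrow> bool \<Rightarrow> gtree list \<Rightarrow>
    real \<Rightarrow> nat \<times> nat \<times> real \<times> real \<times> real \<Rightarrow> bool" where
  "is_maximizer U p b ts \<mu> c \<longleftrightarrow> feasible ts \<mu> c \<and>
     (\<forall>c'. feasible ts \<mu> c' \<longrightarrow> cand_val U p b ts c' \<le> cand_val U p b ts c)"

end

theory Submission
  imports Defs
begin

(* On the line, the concave envelope of finitely many functions that are bounded above is the
   supremum of their two-point combinations: a convex combination of finitely many graph points
   is dominated by the best chord over its barycentre, because every point lies below a line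
   through the value of that chord (Caratheodory in dimension one). Hence the value of the
   selected one-step lookahead equals the target EPF at the promise, so the leader's payoff
   deviates from the learned EPF by at most the local loss plus a convex combination of the
   errors at the two chosen children; induction on the subtree gives the bound epsilon times
   the depth. *)

section \<open>Two-point combinations on the line\<close>

lemma chord_slopes_le:
  fixes ap aq z vp vq M :: real
  assumes "ap < z" "z < aq" and "((aq - z) * vp + (z - ap) * vq) / (aq - ap) \<le> M"
  shows "(vq - M) / (aq - z) \<le> (M - vp) / (z - ap)"
proof -
  have "(aq - z) * vp + (z - ap) * vq \<le> M * (aq - ap)"
    using assms by (simp add: field_simps)
  then have "(vq - M) * (z - ap) \<le> (M - vp) * (aq - z)"
    by (simp add: algebra_simps)
  then show ?thesis
    using assms by (simp add: field_simps)
qed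

lemma finite_sets_separated:
  fixes X Y :: "real set"
  assumes "finite X" "finite Y" "\<And>x y. x \<in> X \<Longrightarrow> y \<in> Y \<Longrightarrow> x \<le> y"
  shows "\<exists>\<sigma>. (\<forall>x\<in>X. x \<le> \<sigma>) \<and> (\<forall>y\<in>Y. \<sigma> \<le> y)"
proof (cases "X = {}")
  case True
  then show ?thesis
    using assms(2) by (intro exI[of _ "if Y = {} then 0 else Min Y"]) auto
next
  case False
  then show ?thesis
    using assms by (intro exI[of _ "Max X"]) auto
qed

lemma finite_points_below_line:
  fixes a v :: "'k \<Rightarrow> real"
  assumes "finite K"
    and chord: "\<And>p q. p \<in> K \<Longrightarrow> q \<in> K \<Longrightarrow> a p < z \<Longrightarrow> z < a q \<Longrightarrow>
                  ((a q - z) * v p + (z - a p) * v q) / (a q - a p) \<le> M"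
    and at_z: "\<And>k. k \<in> K \<Longrightarrow> a k = z \<Longrightarrow> v k \<le> M"
  obtains \<sigma> where "\<And>k. k \<in> K \<Longrightarrow> v k \<le> M + \<sigma> * (a k - z)"
proof -
  define left where "left = {k \<in> K. a k < z}"
  define right where "right = {k \<in> K. z < a k}"
  have "\<exists>\<sigma>. (\<forall>x\<in>(\<lambda>q. (v q - M) / (a q - z)) ` right. x \<le> \<sigma>) \<and>
      (\<forall>y\<in>(\<lambda>p. (M - v p) / (z - a p)) ` left. \<sigma> \<le> y)"
    by (rule finite_sets_separated)
      (use \<open>finite K\<close> chord chord_slopes_le in \<open>auto simp: left_def right_def\<close>)
  then obtain \<sigma> where
    right_le: "\<And>q. q \<in> right \<Longrightarrow> (v q - M) / (a q - z) \<le> \<sigma>" and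
    le_left: "\<And>p. p \<in> left \<Longrightarrow> \<sigma> \<le> (M - v p) / (z - a p)"
    by auto
  show ?thesis
  proof (rule that)
    fix k assume k: "k \<in> K"
    consider "a k < z" | "a k = z" | "z < a k" by linarith
    then show "v k \<le> M + \<sigma> * (a k - z)"
    proof cases
      case 1
      then show ?thesis using le_left[of k] k by (simp add: left_def field_simps)
    next
      case 2
      then show ?thesis using at_z k by simp
    next
      case 3
      then show ?thesis using right_le[of k] k by (simp add: right_def field_simps)
    qed
  qed
qed

lemma convex_combination_within_range:
  fixes w a :: "'k \<Rightarrow> real"
  assumes "finite K" and w_nonneg: "\<And>k. k \<in> K \<Longrightarrow> 0 \<le> w k" and w_sum: "(\<Sum>k\<in>K. w k) = 1"
  obtains p q where "p \<in> K" "q \<in> K" "a p \<le> (\<Sum>k\<in>K. w k * a k)" "(\<Sum>k\<in>K. w k * a k) \<le> a q"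
proof -
  have const: "(\<Sum>k\<in>K. w k * c) = c" for c
    by (simp flip: sum_distrib_right add: w_sum)
  have "K \<noteq> {}"
    using w_sum by auto
  obtain p where "p \<in> K" and p_min: "\<And>k. k \<in> K \<Longrightarrow> a p \<le> a k"
    using ex_is_arg_min_if_finite[OF \<open>finite K\<close> \<open>K \<noteq> {}\<close>, of a]
    by (auto simp: is_arg_min_linorder)
  obtain q where "q \<in> K" and q_max: "\<And>k. k \<in> K \<Longrightarrow> a k \<le> a q"
    using ex_is_arg_min_if_finite[OF \<open>finite K\<close> \<open>K \<noteq> {}\<close>, of "\<lambda>k. - a k"]
    by (auto simp: is_arg_min_linorder)
  have "a p = (\<Sum>k\<in>K. w k * a p)"
    by (rule const[symmetric])
  also have "\<dots> \<le> (\<Sum>k\<in>K. w k * a k)"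
    by (intro sum_mono mult_left_mono w_nonneg p_min)
  finally have "a p \<le> (\<Sum>k\<in>K. w k * a k)" .
  moreover have "(\<Sum>k\<in>K. w k * a k) \<le> (\<Sum>k\<in>K. w k * a q)"
    by (intro sum_mono mult_left_mono w_nonneg q_max)
  ultimately show ?thesis
    using that \<open>p \<in> K\<close> \<open>q \<in> K\<close> const by simp
qed

lemma convex_combination_le_two_point:
  fixes w a v :: "'k \<Rightarrow> real"
  assumes "finite K" and w_nonneg: "\<And>k. k \<in> K \<Longrightarrow> 0 \<le> w k" and w_sum: "(\<Sum>k\<in>K. w k) = 1"
  obtains p q \<tau> where "p \<in> K" "q \<in> K" "0 \<le> \<tau>" "\<tau> \<le> 1"
    "\<tau> * a p + (1 - \<tau>) * a q = (\<Sum>k\<in>K. w k * a k)"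
    "(\<Sum>k\<in>K. w k * v k) \<le> \<tau> * v p + (1 - \<tau>) * v q"
proof -
  define z where "z = (\<Sum>k\<in>K. w k * a k)"
  define \<tau> where "\<tau> p q = (if a p = a q then 1 else (a q - z) / (a q - a p))" for p q
  define chord where "chord p q = \<tau> p q * v p + (1 - \<tau> p q) * v q" for p q
  define straddle where "straddle = {(p, q) \<in> K \<times> K. a p \<le> z \<and> z \<le> a q}"
  have \<tau>: "0 \<le> \<tau> p q" "\<tau> p q \<le> 1" "\<tau> p q * a p + (1 - \<tau> p q) * a q = z"
    if "(p, q) \<in> straddle" for p q
    using that by (auto simp: \<tau>_def straddle_def field_simps)
  have chord_eq: "chord p q = ((a q - z) * v p + (z - a p) * v q) / (a q - a p)" if "a p < a q" for p q
    using that by (simp add: chord_def \<tau>_def divide_simps)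
  obtain p0 q0 where "(p0, q0) \<in> straddle"
    by (rule convex_combination_within_range[OF assms, of a]) (auto simp: straddle_def z_def)
  moreover have "finite straddle"
    using \<open>finite K\<close> by (auto simp: straddle_def intro: finite_subset[of _ "K \<times> K"])
  ultimately obtain p q where pq: "(p, q) \<in> straddle"
    and pq_max: "\<And>p' q'. (p', q') \<in> straddle \<Longrightarrow> chord p' q' \<le> chord p q"
    using ex_is_arg_min_if_finite[of straddle "\<lambda>(p, q). - chord p q"]
    by (fastforce simp: is_arg_min_linorder)
  obtain \<sigma> where below: "\<And>k. k \<in> K \<Longrightarrow> v k \<le> chord p q + \<sigma> * (a k - z)"
  proof (rule finite_points_below_line[OF \<open>finite K\<close>])
    show "((a q' - z) * v p' + (z - a p') * v q') / (a q' - a p') \<le> chord p q"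
      if "p' \<in> K" "q' \<in> K" "a p' < z" "z < a q'" for p' q'
      using that pq_max[of p' q'] chord_eq[of p' q'] by (simp add: straddle_def)
    show "v k \<le> chord p q" if "k \<in> K" "a k = z" for k
      using that pq_max[of k k] by (simp add: straddle_def chord_def \<tau>_def)
  qed blast
  have "(\<Sum>k\<in>K. w k * v k) \<le> (\<Sum>k\<in>K. w k * (chord p q + \<sigma> * (a k - z)))"
    by (intro sum_mono mult_left_mono below w_nonneg)
  also have "\<dots> = chord p q * (\<Sum>k\<in>K. w k) + \<sigma> * ((\<Sum>k\<in>K. w k * a k) - z * (\<Sum>k\<in>K. w k))"
    by (simp add: algebra_simps sum.distrib sum_subtractf sum_distrib_left sum_distrib_right)
  also have "\<dots> = chord p q"
    by (simp add: w_sum z_def)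
  finally show ?thesis
    using that[of p q "\<tau> p q"] pq \<tau>[OF pq] by (auto simp: straddle_def chord_def z_def)
qed

section \<open>The concave envelope as a supremum of two-point combinations\<close>

lemma ereal_SUP_add_SUP_le:
  fixes f :: "'a \<Rightarrow> ereal" and g :: "'b \<Rightarrow> ereal"
  assumes "A \<noteq> {}" "B \<noteq> {}" "(SUP a\<in>A. f a) \<noteq> \<infinity>" "(SUP b\<in>B. g b) \<noteq> \<infinity>"
    and le: "\<And>a b. a \<in> A \<Longrightarrow> b \<in> B \<Longrightarrow> f a + g b \<le> z"
  shows "(SUP a\<in>A. f a) + (SUP b\<in>B. g b) \<le> z"
proof (cases "(SUP b\<in>B. g b) = -\<infinity>")
  case True
  then show ?thesis
    using assms(3) by (cases "SUP a\<in>A. f a") auto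
next
  case False
  have "f a + (SUP b\<in>B. g b) \<le> z" if "a \<in> A" for a
  proof (cases "f a = -\<infinity>")
    case True
    then show ?thesis
      using assms(4) by (cases "SUP b\<in>B. g b") auto
  next
    case False
    then show ?thesis
      using le \<open>a \<in> A\<close> by (auto simp flip: SUP_ereal_add_right[OF \<open>B \<noteq> {}\<close>] intro: SUP_least)
  qed
  then show ?thesis
    using False by (auto simp flip: SUP_ereal_add_left[OF \<open>A \<noteq> {}\<close>] intro: SUP_least)
qed

definition two_point_split :: "'i set \<Rightarrow> real \<Rightarrow> 'i \<times> 'i \<times> real \<times> real \<times> real \<Rightarrow> bool" where
  "two_point_split I \<mu> c \<longleftrightarrow> (case c of (i, j, t, m1, m2) \<Rightarrow>
     i \<in> I \<and> j \<in> I \<and> 0 \<le> t \<and> t \<le> 1 \<and> t * m1 + (1 - t) * m2 = \<mu>)"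

definition two_point_value :: "('i \<Rightarrow> real \<Rightarrow> ereal) \<Rightarrow> 'i \<times> 'i \<times> real \<times> real \<times> real \<Rightarrow> ereal" where
  "two_point_value G c = (case c of (i, j, t, m1, m2) \<Rightarrow> ereal t * G i m1 + ereal (1 - t) * G j m2)"

definition two_point_hull :: "('i \<Rightarrow> real \<Rightarrow> ereal) \<Rightarrow> 'i set \<Rightarrow> real \<Rightarrow> ereal" where
  "two_point_hull G I \<mu> = (SUP c \<in> Collect (two_point_split I \<mu>). two_point_value G c)"

lemma two_point_split_diag: "i \<in> I \<Longrightarrow> two_point_split I \<mu> (i, i, 1, \<mu>, \<mu>)"
  by (simp add: two_point_split_def)

lemma two_point_value_diag: "two_point_value G (i, i, 1, \<mu>, \<mu>) = G i \<mu>"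
  by (simp add: two_point_value_def zero_ereal_def[symmetric])

lemma two_point_value_le:
  assumes "\<And>i x. i \<in> I \<Longrightarrow> G i x \<le> ereal B" and "two_point_split I \<mu> c"
  shows "two_point_value G c \<le> ereal B"
proof -
  obtain i j t m1 m2 where c: "c = (i, j, t, m1, m2)"
    by (cases c)
  have "ereal t * G i m1 + ereal (1 - t) * G j m2 \<le> ereal t * ereal B + ereal (1 - t) * ereal B"
    using assms by (intro add_mono ereal_mult_left_mono) (auto simp: c two_point_split_def)
  then show ?thesis
    by (simp add: c two_point_value_def algebra_simps)
qed

lemma two_point_hull_le:
  "(\<And>i x. i \<in> I \<Longrightarrow> G i x \<le> ereal B) \<Longrightarrow> two_point_hull G I \<mu> \<le> ereal B"
  unfolding two_point_hull_def by (auto intro: SUP_least two_point_value_le)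

lemma le_two_point_hull: "i \<in> I \<Longrightarrow> G i \<mu> \<le> two_point_hull G I \<mu>"
  unfolding two_point_hull_def
  by (rule SUP_upper2[of "(i, i, 1, \<mu>, \<mu>)"]) (auto simp: two_point_split_diag two_point_value_diag)

lemma two_point_value_le_concave:
  assumes "concave_ext h" "\<And>i x. i \<in> I \<Longrightarrow> G i x \<le> h x" and "two_point_split I \<mu> c"
  shows "two_point_value G c \<le> h \<mu>"
proof -
  obtain i j t m1 m2 where c: "c = (i, j, t, m1, m2)"
    by (cases c)
  have "ereal t * G i m1 + ereal (1 - t) * G j m2 \<le> ereal t * h m1 + ereal (1 - t) * h m2"
    using assms by (intro add_mono ereal_mult_left_mono) (auto simp: c two_point_split_def)
  also have "\<dots> \<le> h \<mu>"
    using assms unfolding concave_ext_def by (auto simp: c two_point_split_def)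
  finally show ?thesis
    by (simp add: c two_point_value_def)
qed

lemma two_point_value_eq_ereal:
  assumes "two_point_value G (i, j, t, m1, m2) = ereal r" "0 \<le> t" "t \<le> 1"
    and "G i m1 \<noteq> \<infinity>" "G j m2 \<noteq> \<infinity>"
  obtains \<alpha> \<beta> where "t \<noteq> 0 \<Longrightarrow> G i m1 = ereal \<alpha>" "t \<noteq> 1 \<Longrightarrow> G j m2 = ereal \<beta>"
    "r = t * \<alpha> + (1 - t) * \<beta>"
  using assms unfolding two_point_value_def
  by (cases "G i m1"; cases "G j m2"; cases "t = 0"; cases "t = 1") (auto simp: zero_ereal_def)

lemma convex_combination_le_two_point_hull:
  fixes w x v :: "'k \<Rightarrow> real"
  assumes "finite K" "\<And>k. k \<in> K \<Longrightarrow> 0 \<le> w k" "(\<Sum>k\<in>K. w k) = 1"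
    and "\<And>k. k \<in> K \<Longrightarrow> idx k \<in> I"
    and "\<And>k. k \<in> K \<Longrightarrow> w k \<noteq> 0 \<Longrightarrow> G (idx k) (x k) = ereal (v k)"
  shows "ereal (\<Sum>k\<in>K. w k * v k) \<le> two_point_hull G I (\<Sum>k\<in>K. w k * x k)"
proof -
  define S where "S = {k \<in> K. w k \<noteq> 0}"
  have on_S: "(\<Sum>k\<in>S. w k * f k) = (\<Sum>k\<in>K. w k * f k)" for f
    by (rule sum.mono_neutral_left) (auto simp: S_def \<open>finite K\<close>)
  have "finite S" "\<And>k. k \<in> S \<Longrightarrow> 0 \<le> w k" "(\<Sum>k\<in>S. w k) = 1"
    using on_S[of "\<lambda>_. 1"] assms by (auto simp: S_def)
  then obtain p q \<tau> where "p \<in> S" "q \<in> S" "0 \<le> \<tau>" "\<tau> \<le> 1"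
    "\<tau> * x p + (1 - \<tau>) * x q = (\<Sum>k\<in>S. w k * x k)"
    "(\<Sum>k\<in>S. w k * v k) \<le> \<tau> * v p + (1 - \<tau>) * v q"
    by (rule convex_combination_le_two_point)
  moreover from this have "two_point_value G (idx p, idx q, \<tau>, x p, x q) = ereal (\<tau> * v p + (1 - \<tau>) * v q)"
    using assms by (simp add: two_point_value_def S_def)
  ultimately show ?thesis
    unfolding two_point_hull_def on_S
    by (intro SUP_upper2[of "(idx p, idx q, \<tau>, x p, x q)"])
      (use assms in \<open>auto simp: two_point_split_def S_def\<close>)
qed

lemma four_point_combination_le_two_point_hull:
  assumes split1: "two_point_split I x (i1, j1, t1, a1, a2)"
    and split2: "two_point_split I y (i2, j2, t2, b1, b2)"
    and s: "0 \<le> s" "s \<le> 1"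
    and fin1: "t1 \<noteq> 0 \<Longrightarrow> G i1 a1 = ereal \<alpha>1" "t1 \<noteq> 1 \<Longrightarrow> G j1 a2 = ereal \<beta>1"
    and fin2: "t2 \<noteq> 0 \<Longrightarrow> G i2 b1 = ereal \<alpha>2" "t2 \<noteq> 1 \<Longrightarrow> G j2 b2 = ereal \<beta>2"
  shows "ereal (s * (t1 * \<alpha>1 + (1 - t1) * \<beta>1) + (1 - s) * (t2 * \<alpha>2 + (1 - t2) * \<beta>2))
           \<le> two_point_hull G I (s * x + (1 - s) * y)"
proof -
  define K :: "nat set" where "K = {0, 1, 2, 3}"
  define w where "w = (!) [s * t1, s * (1 - t1), (1 - s) * t2, (1 - s) * (1 - t2)]"
  define idx where "idx = (!) [i1, j1, i2, j2]"
  define pt where "pt = (!) [a1, a2, b1, b2]"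
  define v where "v = (!) [\<alpha>1, \<beta>1, \<alpha>2, \<beta>2]"
  have "ereal (\<Sum>k\<in>K. w k * v k) \<le> two_point_hull G I (\<Sum>k\<in>K. w k * pt k)"
  proof (rule convex_combination_le_two_point_hull)
    show "finite K" "(\<Sum>k\<in>K. w k) = 1"
      by (simp_all add: K_def w_def algebra_simps)
    show "0 \<le> w k" if "k \<in> K" for k
      using that split1 split2 s by (auto simp: K_def w_def two_point_split_def)
    show "idx k \<in> I" if "k \<in> K" for k
      using that split1 split2 by (auto simp: K_def idx_def two_point_split_def)
    show "G (idx k) (pt k) = ereal (v k)" if "k \<in> K" "w k \<noteq> 0" for k
      using that fin1 fin2 by (auto simp: K_def w_def idx_def pt_def v_def)
  qed
  moreover have "(\<Sum>k\<in>K. w k * pt k) = s * (t1 * a1 + (1 - t1) * a2) + (1 - s) * (t2 * b1 + (1 - t2) * b2)"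
    by (simp add: K_def w_def pt_def algebra_simps)
  moreover have "t1 * a1 + (1 - t1) * a2 = x" "t2 * b1 + (1 - t2) * b2 = y"
    using split1 split2 by (simp_all add: two_point_split_def)
  moreover have "(\<Sum>k\<in>K. w k * v k) = s * (t1 * \<alpha>1 + (1 - t1) * \<beta>1) + (1 - s) * (t2 * \<alpha>2 + (1 - t2) * \<beta>2)"
    by (simp add: K_def w_def v_def algebra_simps)
  ultimately show ?thesis
    by simp
qed

lemma two_point_hull_concave_ineq:
  assumes bound: "\<And>i x. i \<in> I \<Longrightarrow> G i x \<le> ereal B" and s: "0 < s" "s < 1"
    and c1: "two_point_split I x c1" and c2: "two_point_split I y c2"
  shows "ereal s * two_point_value G c1 + ereal (1 - s) * two_point_value G c2
           \<le> two_point_hull G I (s * x + (1 - s) * y)"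
proof -
  obtain i1 j1 t1 a1 a2 i2 j2 t2 b1 b2 where c: "c1 = (i1, j1, t1, a1, a2)" "c2 = (i2, j2, t2, b1, b2)"
    by (cases c1; cases c2)
  have G_finite: "G i z \<noteq> \<infinity>" if "i \<in> I" for i z
    using bound[OF that, of z] by auto
  have "two_point_value G c1 \<noteq> \<infinity>" "two_point_value G c2 \<noteq> \<infinity>"
    using two_point_value_le[where G = G, OF bound c1] two_point_value_le[where G = G, OF bound c2] by auto
  show ?thesis
  proof (cases "two_point_value G c1 = -\<infinity> \<or> two_point_value G c2 = -\<infinity>")
    case True
    then show ?thesis
      using \<open>two_point_value G c1 \<noteq> \<infinity>\<close> \<open>two_point_value G c2 \<noteq> \<infinity>\<close> s
      by (cases "two_point_value G c1"; cases "two_point_value G c2") auto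
  next
    case False
    then obtain r1 r2 where r: "two_point_value G c1 = ereal r1" "two_point_value G c2 = ereal r2"
      using \<open>two_point_value G c1 \<noteq> \<infinity>\<close> \<open>two_point_value G c2 \<noteq> \<infinity>\<close>
      by (cases "two_point_value G c1"; cases "two_point_value G c2") auto
    obtain \<alpha>1 \<beta>1 where "t1 \<noteq> 0 \<Longrightarrow> G i1 a1 = ereal \<alpha>1" "t1 \<noteq> 1 \<Longrightarrow> G j1 a2 = ereal \<beta>1"
      and r1: "r1 = t1 * \<alpha>1 + (1 - t1) * \<beta>1"
      by (rule two_point_value_eq_ereal[OF r(1)[unfolded c(1)]])
        (use c1 G_finite in \<open>auto simp: c two_point_split_def\<close>)
    moreover obtain \<alpha>2 \<beta>2 where "t2 \<noteq> 0 \<Longrightarrow> G i2 b1 = ereal \<alpha>2" "t2 \<noteq> 1 \<Longrightarrow> G j2 b2 = ereal \<beta>2"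
      and r2: "r2 = t2 * \<alpha>2 + (1 - t2) * \<beta>2"
      by (rule two_point_value_eq_ereal[OF r(2)[unfolded c(2)]])
        (use c2 G_finite in \<open>auto simp: c two_point_split_def\<close>)
    ultimately show ?thesis
      using four_point_combination_le_two_point_hull[of I x i1 j1 t1 a1 a2 y i2 j2 t2 b1 b2 s G]
        c1 c2 s r r1 r2 by (simp add: c)
  qed
qed

lemma concave_two_point_hull:
  assumes bound: "\<And>i x. i \<in> I \<Longrightarrow> G i x \<le> ereal B" and "I \<noteq> {}"
  shows "concave_ext (two_point_hull G I)"
  unfolding concave_ext_def
proof (intro conjI allI impI)
  have hull_finite: "two_point_hull G I z \<noteq> \<infinity>" for z
    using two_point_hull_le[of I G B z, OF bound] by auto
  then show "two_point_hull G I z \<noteq> \<infinity>" for z .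
  fix x y s :: real
  assume "0 \<le> s \<and> s \<le> 1"
  then consider "s = 0" | "s = 1" | "0 < s" "s < 1"
    by linarith
  then show "ereal s * two_point_hull G I x + ereal (1 - s) * two_point_hull G I y
               \<le> two_point_hull G I (s * x + (1 - s) * y)"
  proof cases
    case 3
    obtain i0 where "i0 \<in> I"
      using \<open>I \<noteq> {}\<close> by blast
    have nonempty: "Collect (two_point_split I z) \<noteq> {}" for z
      using two_point_split_diag[OF \<open>i0 \<in> I\<close>, of z] by blast
    have scale: "ereal r * two_point_hull G I z
        = (SUP c \<in> Collect (two_point_split I z). ereal r * two_point_value G c)" if "0 \<le> r" for r z
      unfolding two_point_hull_def using that by (intro Sup_ereal_mult_left' nonempty)
    have "ereal s * two_point_hull G I x + ereal (1 - s) * two_point_hull G I y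
        = (SUP c \<in> Collect (two_point_split I x). ereal s * two_point_value G c)
          + (SUP c \<in> Collect (two_point_split I y). ereal (1 - s) * two_point_value G c)"
      using 3 by (simp add: scale)
    also have "\<dots> \<le> two_point_hull G I (s * x + (1 - s) * y)"
    proof (rule ereal_SUP_add_SUP_le[OF nonempty nonempty])
      show "(SUP c \<in> Collect (two_point_split I x). ereal s * two_point_value G c) \<noteq> \<infinity>"
        "(SUP c \<in> Collect (two_point_split I y). ereal (1 - s) * two_point_value G c) \<noteq> \<infinity>"
        using 3 hull_finite by (simp_all flip: scale)
    qed (use 3 two_point_hull_concave_ineq[of I G B s, OF bound] in auto)
    finally show ?thesis .
  qed (simp_all add: zero_ereal_def[symmetric])
qed

lemma env_eq_two_point_hull:
  assumes "I \<noteq> {}" and bound: "\<And>i x. i \<in> I \<Longrightarrow> G i x \<le> ereal B"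
  shows "env (G ` I) = two_point_hull G I"
proof (rule ext, rule antisym)
  fix \<mu>
  show "env (G ` I) \<mu> \<le> two_point_hull G I \<mu>"
    unfolding env_def
    by (rule INF_lower) (auto intro: concave_two_point_hull[OF bound \<open>I \<noteq> {}\<close>] le_two_point_hull)
  show "two_point_hull G I \<mu> \<le> env (G ` I) \<mu>"
    unfolding env_def two_point_hull_def
    by (intro INF_greatest SUP_least two_point_value_le_concave) auto
qed

lemma two_point_hull_eq_maximal_value:
  assumes "two_point_split I \<mu> c"
    and "\<And>c'. two_point_split I \<mu> c' \<Longrightarrow> two_point_value G c' \<le> two_point_value G c"
  shows "two_point_hull G I \<mu> = two_point_value G c"
  unfolding two_point_hull_def using assms by (intro antisym SUP_least SUP_upper) auto

lemma feasible_eq_two_point_split: "feasible ts = two_point_split {..<length ts}"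
  by (auto simp: fun_eq_iff feasible_def two_point_split_def)

lemma cand_val_eq_two_point_value:
  "cand_val U p b ts = two_point_value (\<lambda>k. trunc (U (p @ [k])) (beta b ts k))"
  by (auto simp: fun_eq_iff cand_val_def two_point_value_def)

lemma maximizer_value_eq_env:
  assumes "is_maximizer U p b ts \<mu> c" and bound: "\<And>k x. k < length ts \<Longrightarrow> U (p @ [k]) x \<le> ereal B"
  shows "cand_val U p b ts c = env {trunc (U (p @ [k])) (beta b ts k) | k. k < length ts} \<mu>"
proof -
  define G where "G = (\<lambda>k. trunc (U (p @ [k])) (beta b ts k))"
  have G_value: "cand_val U p b ts = two_point_value G"
    by (simp add: cand_val_eq_two_point_value G_def)
  have split: "two_point_split {..<length ts} \<mu> c"
    and maximal: "\<And>c'. two_point_split {..<length ts} \<mu> c' \<Longrightarrow> two_point_value G c' \<le> two_point_value G c"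
    using assms(1) unfolding is_maximizer_def feasible_eq_two_point_split G_value by blast+
  have "{..<length ts} \<noteq> {}"
    using split by (auto simp: two_point_split_def)
  moreover have "G k x \<le> ereal B" if "k \<in> {..<length ts}" for k x
    using bound[of k x] that by (simp add: G_def trunc_def)
  ultimately have "env (G ` {..<length ts}) = two_point_hull G {..<length ts}"
    by (rule env_eq_two_point_hull)
  moreover have "{trunc (U (p @ [k])) (beta b ts k) | k. k < length ts} = G ` {..<length ts}"
    by (auto simp: G_def)
  ultimately show ?thesis
    using two_point_hull_eq_maximal_value[OF split maximal] by (simp add: G_value)
qed

section \<open>Game trees and learned EPFs\<close>

lemma sub_append: "sub T (p @ q) = (case sub T p of None \<Rightarrow> None | Some s \<Rightarrow> sub s q)"
proof (induction p arbitrary: T)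
  case (Cons i p)
  then show ?case
    by (cases T) auto
qed simp

lemma sub_child: "sub T p = Some (Node b ts) \<Longrightarrow> i < length ts \<Longrightarrow> sub T (p @ [i]) = Some (ts ! i)"
  by (simp add: sub_append)

lemma depth_child_less: "t \<in> set ts \<Longrightarrow> depth t < depth (Node b ts)"
  by (induction ts) (auto simp: less_Suc_eq_le le_max_iff_disj)

lemma depth_sub: "sub T p = Some s \<Longrightarrow> depth s \<le> depth T"
proof (induction p arbitrary: T)
  case (Cons i p)
  then obtain b ts where T: "T = Node b ts" "i < length ts" "sub (ts ! i) p = Some s"
    by (cases T) (auto split: if_splits)
  then have "depth s \<le> depth (ts ! i)"
    using Cons.IH by blast
  also have "\<dots> < depth T"
    using T by (simp add: depth_child_less del: depth.simps)
  finally show ?case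
    by simp
qed simp

lemma pl_epf_real_iff:
  "pl_epf lo hi u \<Longrightarrow> (\<exists>r. u x = ereal r) \<longleftrightarrow> x \<in> {lo..hi}"
  unfolding pl_epf_def by force

lemma finite_gap_around:
  fixes P :: "real set"
  assumes "finite P" "lo \<in> P" "hi \<in> P" "x \<in> {lo..hi}"
  obtains a b where "a \<in> P" "b \<in> P" "a \<le> x" "x \<le> b" "{a<..<b} \<inter> P = {}"
proof -
  define a where "a = Max {p \<in> P. p \<le> x}"
  define b where "b = Min {p \<in> P. x \<le> p}"
  have "{p \<in> P. p \<le> x} \<noteq> {}" "{p \<in> P. x \<le> p} \<noteq> {}"
    using assms by auto
  then have "a \<in> {p \<in> P. p \<le> x}" "b \<in> {p \<in> P. x \<le> p}"
    unfolding a_def b_def using assms(1) by (intro Max_in Min_in; simp)+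
  moreover have "{a<..<b} \<inter> P = {}"
  proof (rule ccontr)
    assume "{a<..<b} \<inter> P \<noteq> {}"
    then obtain p where "p \<in> P" "a < p" "p < b"
      by auto
    have "p \<le> a" if "p \<le> x"
      unfolding a_def using that \<open>p \<in> P\<close> assms(1) by (intro Max_ge) auto
    moreover have "b \<le> p" if "x \<le> p"
      unfolding b_def using that \<open>p \<in> P\<close> assms(1) by (intro Min_le) auto
    ultimately show False
      using \<open>a < p\<close> \<open>p < b\<close> by linarith
  qed
  ultimately show ?thesis
    using that[of a b] by auto
qed

lemma interpolant_le_Max:
  fixes f :: "real \<Rightarrow> real"
  assumes "finite P" "lo \<in> P" "hi \<in> P" "x \<in> {lo..hi}"
    and linear: "\<And>a b x. a \<in> P \<Longrightarrow> b \<in> P \<Longrightarrow> a < b \<Longrightarrow> {a<..<b} \<inter> P = {} \<Longrightarrow> x \<in> {a..b} \<Longrightarrow>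
                   f x = ((b - x) * f a + (x - a) * f b) / (b - a)"
  shows "f x \<le> Max (f ` P)"
proof -
  obtain a b where ab: "a \<in> P" "b \<in> P" "a \<le> x" "x \<le> b" "{a<..<b} \<inter> P = {}"
    using finite_gap_around[OF assms(1-4)] .
  define B where "B = Max (f ` P)"
  have "f a \<le> B" "f b \<le> B"
    using ab \<open>finite P\<close> by (auto simp: B_def)
  show ?thesis
  proof (cases "a = b")
    case True
    then show ?thesis
      using ab \<open>f a \<le> B\<close> by (simp add: B_def)
  next
    case False
    then have "f x = ((b - x) * f a + (x - a) * f b) / (b - a)"
      using ab by (intro linear) auto
    also have "\<dots> \<le> ((b - x) * B + (x - a) * B) / (b - a)"
      using ab \<open>f a \<le> B\<close> \<open>f b \<le> B\<close> by (intro divide_right_mono add_mono mult_left_mono) auto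
    also have "\<dots> = B"
      using False ab by (simp add: field_simps)
    finally show ?thesis
      by (simp add: B_def)
  qed
qed

lemma pl_epf_bounded_above:
  assumes "pl_epf lo hi u"
  shows "\<exists>B. \<forall>x. u x \<le> ereal B"
proof -
  obtain P f where P: "finite P" "lo \<in> P" "hi \<in> P"
    and outside: "\<forall>x. x \<notin> {lo..hi} \<longrightarrow> u x = -\<infinity>"
    and inside: "\<forall>x\<in>{lo..hi}. u x = ereal (f x)"
    and linear: "\<forall>a\<in>P. \<forall>b\<in>P. a < b \<and> {a<..<b} \<inter> P = {} \<longrightarrow>
                   (\<forall>x\<in>{a..b}. f x = ((b - x) * f a + (x - a) * f b) / (b - a))"
    using assms unfolding pl_epf_def by blast
  have "f x \<le> Max (f ` P)" if "x \<in> {lo..hi}" for x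
    by (rule interpolant_le_Max[OF P that]) (use linear in blast)
  then have "u x \<le> ereal (Max (f ` P))" for x
    using inside outside by (cases "x \<in> {lo..hi}") simp_all
  then show ?thesis
    by blast
qed

lemma linf_pointwise_le: "(if f \<mu> = g \<mu> then 0 else \<bar>f \<mu> - g \<mu>\<bar>) \<le> linf f g"
  unfolding linf_def by (rule SUP_upper) simp

lemma linf_nonneg: "0 \<le> linf f g"
proof -
  have "(0::ereal) \<le> (if f 0 = g 0 then 0 else \<bar>f 0 - g 0\<bar>)"
    by simp
  then show ?thesis
    using linf_pointwise_le by (rule order_trans)
qed

lemma linf_le_imp_real:
  assumes "linf f g \<le> ereal \<epsilon>" and "f \<mu> = ereal x"
  obtains y where "g \<mu> = ereal y" "\<bar>x - y\<bar> \<le> \<epsilon>"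
proof -
  have "(if f \<mu> = g \<mu> then 0 else \<bar>f \<mu> - g \<mu>\<bar>) \<le> ereal \<epsilon>"
    using linf_pointwise_le assms(1) by (rule order_trans)
  then show ?thesis
    using that assms(2) by (cases "g \<mu>") (auto split: if_splits)
qed

lemma abs_convex_comb_diff_le:
  fixes t x1 x2 y1 y2 e :: real
  assumes "0 \<le> t" "t \<le> 1" "t \<noteq> 0 \<Longrightarrow> \<bar>x1 - y1\<bar> \<le> e" "t \<noteq> 1 \<Longrightarrow> \<bar>x2 - y2\<bar> \<le> e"
  shows "\<bar>(t * x1 + (1 - t) * x2) - (t * y1 + (1 - t) * y2)\<bar> \<le> e"
proof -
  consider "t = 0" | "t = 1" | "t \<noteq> 0" "t \<noteq> 1"
    by blast
  then show ?thesis
  proof cases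
    case 3
    have "\<bar>t * (x1 - y1) + (1 - t) * (x2 - y2)\<bar> \<le> t * e + (1 - t) * e"
      using assms 3 by (intro abs_triangle_ineq[THEN order_trans] add_mono)
        (auto simp: abs_mult intro: mult_left_mono)
    then show ?thesis
      by (simp add: algebra_simps)
  qed (use assms in auto)
qed

section \<open>Error propagation along the lookahead play\<close>

locale lookahead_play =
  fixes T :: gtree
    and U :: "nat list \<Rightarrow> real \<Rightarrow> ereal"
    and Q :: "nat list \<Rightarrow> real \<Rightarrow> real"
    and sel :: "nat list \<Rightarrow> real \<Rightarrow> nat \<times> nat \<times> real \<times> real \<times> real"
    and \<epsilon> :: real
  assumes U_leaf: "\<And>p r1 r2. sub T p = Some (Leaf r1 r2) \<Longrightarrow> U p = leaf_epf r1 r2"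
    and U_node: "\<And>p b ts. sub T p = Some (Node b ts) \<Longrightarrow>
                   pl_epf (vlo (Node b ts)) (vhi (Node b ts)) (U p)"
    and loss: "\<And>p. sub T p \<noteq> None \<Longrightarrow> linf (U p) (target T U p) \<le> ereal \<epsilon>"
    and Q_leaf: "\<And>p r1 r2. sub T p = Some (Leaf r1 r2) \<Longrightarrow> Q p r2 = r1"
    and sel_max: "\<And>p b ts \<mu>. sub T p = Some (Node b ts) \<Longrightarrow>
                   \<mu> \<in> {vlo (Node b ts)..vhi (Node b ts)} \<Longrightarrow> is_maximizer U p b ts \<mu> (sel p \<mu>)"
    and Q_node: "\<And>p b ts \<mu> i j t m1 m2. sub T p = Some (Node b ts) \<Longrightarrow>
                   \<mu> \<in> {vlo (Node b ts)..vhi (Node b ts)} \<Longrightarrow> sel p \<mu> = (i, j, t, m1, m2) \<Longrightarrow>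
                   Q p \<mu> = t * Q (p @ [i]) m1 + (1 - t) * Q (p @ [j]) m2"
begin

lemma eps_nonneg: "0 \<le> \<epsilon>"
proof -
  have "linf (U []) (target T U []) \<le> ereal \<epsilon>"
    by (rule loss) simp
  with linf_nonneg have "0 \<le> ereal \<epsilon>"
    by (rule order_trans)
  then show ?thesis
    by simp
qed

lemma U_real_iff:
  assumes "sub T p = Some s"
  shows "(\<exists>r. U p x = ereal r) \<longleftrightarrow> x \<in> {vlo s..vhi s}"
proof (cases s)
  case (Leaf r1 r2)
  then show ?thesis
    using U_leaf assms by (simp add: leaf_epf_def)
next
  case (Node b ts)
  then show ?thesis
    using U_node assms pl_epf_real_iff by blast
qed

lemma U_bounded_above:
  assumes "sub T p = Some s"
  shows "\<exists>B. \<forall>x. U p x \<le> ereal B"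
proof (cases s)
  case (Leaf r1 r2)
  then have "U p x \<le> ereal r1" for x
    using U_leaf assms by (simp add: leaf_epf_def)
  then show ?thesis
    by blast
next
  case (Node b ts)
  then show ?thesis
    using U_node assms pl_epf_bounded_above by blast
qed

lemma U_not_PInf:
  assumes "sub T p = Some s"
  shows "U p x \<noteq> \<infinity>"
proof -
  obtain B where "U p x \<le> ereal B"
    using U_bounded_above[OF assms] by blast
  then show ?thesis
    by auto
qed

lemma children_bounded_above:
  assumes "sub T p = Some (Node b ts)"
  obtains B where "\<And>k x. k < length ts \<Longrightarrow> U (p @ [k]) x \<le> ereal B"
proof -
  obtain B where B: "\<And>k x. k < length ts \<Longrightarrow> U (p @ [k]) x \<le> ereal (B k)"
    using U_bounded_above[OF sub_child[OF assms]] by metis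
  have "U (p @ [k]) x \<le> ereal (\<Sum>k'<length ts. \<bar>B k'\<bar>)" if "k < length ts" for k x
  proof -
    have "\<bar>B k\<bar> \<le> (\<Sum>k'<length ts. \<bar>B k'\<bar>)"
      by (rule member_le_sum) (use that in auto)
    then have "B k \<le> (\<Sum>k'<length ts. \<bar>B k'\<bar>)"
      by linarith
    then show ?thesis
      using B[OF that, of x] by (simp add: order_trans)
  qed
  then show ?thesis
    using that by blast
qed

lemma selected_value_eq_target:
  assumes "sub T p = Some (Node b ts)" "\<mu> \<in> {vlo (Node b ts)..vhi (Node b ts)}"
  shows "cand_val U p b ts (sel p \<mu>) = target T U p \<mu>"
proof -
  obtain B where "\<And>k x. k < length ts \<Longrightarrow> U (p @ [k]) x \<le> ereal B"
    using children_bounded_above[OF assms(1)] by blast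
  from maximizer_value_eq_env[OF sel_max[OF assms] this] show ?thesis
    by (simp add: target_def assms(1))
qed

lemma node_error_step:
  assumes node: "sub T p = Some (Node b ts)" "\<mu> \<in> {vlo (Node b ts)..vhi (Node b ts)}"
    and children: "\<And>k m. k < length ts \<Longrightarrow> m \<in> {vlo (ts ! k)..vhi (ts ! k)} \<Longrightarrow>
                     \<bar>ereal (Q (p @ [k]) m) - U (p @ [k]) m\<bar> \<le> ereal e"
  shows "\<bar>ereal (Q p \<mu>) - U p \<mu>\<bar> \<le> ereal (e + \<epsilon>)"
proof -
  define G where "G = (\<lambda>k. trunc (U (p @ [k])) (beta b ts k))"
  obtain i j t m1 m2 where sel: "sel p \<mu> = (i, j, t, m1, m2)"
    by (cases "sel p \<mu>")
  have ij: "i < length ts" "j < length ts" and t: "0 \<le> t" "t \<le> 1"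
    using sel_max[OF node] by (auto simp: sel is_maximizer_def feasible_def)
  obtain u where u: "U p \<mu> = ereal u"
    using U_real_iff[OF node(1)] node(2) by blast
  obtain v where v: "two_point_value G (i, j, t, m1, m2) = ereal v" "\<bar>u - v\<bar> \<le> \<epsilon>"
    using linf_le_imp_real[OF loss u] selected_value_eq_target[OF node]
    by (auto simp: node(1) sel cand_val_eq_two_point_value G_def)
  have G_finite: "G k x \<noteq> \<infinity>" if "k < length ts" for k x
    using U_not_PInf[OF sub_child[OF node(1) that]] by (simp add: G_def trunc_def)
  obtain \<alpha> \<beta> where \<alpha>: "t \<noteq> 0 \<Longrightarrow> G i m1 = ereal \<alpha>" and \<beta>: "t \<noteq> 1 \<Longrightarrow> G j m2 = ereal \<beta>"
    and v_eq: "v = t * \<alpha> + (1 - t) * \<beta>"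
    by (rule two_point_value_eq_ereal[OF v(1) t]) (use G_finite ij in auto)
  have child_error: "\<bar>Q (p @ [k]) m - g\<bar> \<le> e" if "k < length ts" "G k m = ereal g" for k m g
  proof -
    have U_k: "U (p @ [k]) m = ereal g"
      using that(2) by (simp add: G_def trunc_def split: if_splits)
    then have "m \<in> {vlo (ts ! k)..vhi (ts ! k)}"
      using U_real_iff[OF sub_child[OF node(1) that(1)]] by blast
    then have "\<bar>ereal (Q (p @ [k]) m) - U (p @ [k]) m\<bar> \<le> ereal e"
      by (rule children[OF that(1)])
    then show ?thesis
      by (simp add: U_k)
  qed
  have "\<bar>Q p \<mu> - v\<bar> \<le> e"
    unfolding Q_node[OF node sel] v_eq by (intro abs_convex_comb_diff_le child_error \<alpha> \<beta> ij t)
  then have "\<bar>Q p \<mu> - u\<bar> \<le> e + \<epsilon>"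
    using v(2) unfolding abs_le_iff by linarith
  then show ?thesis
    using u by simp
qed

lemma payoff_error_le_depth:
  assumes "sub T p = Some s" "\<mu> \<in> {vlo s..vhi s}"
  shows "\<bar>ereal (Q p \<mu>) - U p \<mu>\<bar> \<le> ereal (\<epsilon> * depth s)"
  using assms
proof (induction s arbitrary: p \<mu>)
  case (Leaf r1 r2)
  then show ?case
    using U_leaf Q_leaf by (simp add: leaf_epf_def)
next
  case (Node b ts)
  have "\<bar>ereal (Q (p @ [k]) m) - U (p @ [k]) m\<bar> \<le> ereal (\<epsilon> * (real (depth (Node b ts)) - 1))"
    if "k < length ts" "m \<in> {vlo (ts ! k)..vhi (ts ! k)}" for k m
  proof -
    have "\<bar>ereal (Q (p @ [k]) m) - U (p @ [k]) m\<bar> \<le> ereal (\<epsilon> * depth (ts ! k))"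
      using that by (intro Node.IH[OF _ sub_child[OF Node.prems(1)]]) auto
    also have "\<dots> \<le> ereal (\<epsilon> * (real (depth (Node b ts)) - 1))"
      using depth_child_less[of "ts ! k" ts b] that(1) eps_nonneg
      by (simp del: depth.simps) (intro mult_left_mono; simp)
    finally show ?thesis .
  qed
  from node_error_step[OF Node.prems this] show ?case
    by (simp add: algebra_simps del: depth.simps)
qed

end

theorem theorem6:
  fixes T :: gtree
    and U :: "nat list \<Rightarrow> real \<Rightarrow> ereal"
    and Q :: "nat list \<Rightarrow> real \<Rightarrow> real"
    and sel :: "nat list \<Rightarrow> real \<Rightarrow> nat \<times> nat \<times> real \<times> real \<times> real"
    and \<epsilon> :: real
  assumes wf: "wf_tree T"
    and U_leaf: "\<And>p r1 r2. sub T p = Some (Leaf r1 r2) \<Longrightarrow> U p = leaf_epf r1 r2"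
    and U_node: "\<And>p b ts. sub T p = Some (Node b ts) \<Longrightarrow>
                   pl_epf (vlo (Node b ts)) (vhi (Node b ts)) (U p)"
    and loss: "\<And>p. sub T p \<noteq> None \<Longrightarrow> linf (U p) (target T U p) \<le> ereal \<epsilon>"
    and Q_leaf: "\<And>p r1 r2. sub T p = Some (Leaf r1 r2) \<Longrightarrow> Q p r2 = r1"
    and sel_max: "\<And>p b ts \<mu>. sub T p = Some (Node b ts) \<Longrightarrow>
                   \<mu> \<in> {vlo (Node b ts)..vhi (Node b ts)} \<Longrightarrow> is_maximizer U p b ts \<mu> (sel p \<mu>)"
    and Q_node: "\<And>p b ts \<mu> i j t m1 m2. sub T p = Some (Node b ts) \<Longrightarrow>
                   \<mu> \<in> {vlo (Node b ts)..vhi (Node b ts)} \<Longrightarrow> sel p \<mu> = (i, j, t, m1, m2) \<Longrightarrow>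
                   Q p \<mu> = t * Q (p @ [i]) m1 + (1 - t) * Q (p @ [j]) m2"
  shows "\<forall>p s. sub T p = Some s \<longrightarrow> (\<forall>\<mu>\<in>{vlo s..vhi s}.
            \<bar>ereal (Q p \<mu>) - U p \<mu>\<bar> \<le> ereal (\<epsilon> * real (depth T)))"
proof -
  interpret lookahead_play T U Q sel \<epsilon>
    by (rule lookahead_play.intro) (fact U_leaf U_node loss Q_leaf sel_max Q_node)+
  show ?thesis
  proof (intro allI impI ballI)
    fix p s \<mu>
    assume "sub T p = Some s" "\<mu> \<in> {vlo s..vhi s}"
    then have "\<bar>ereal (Q p \<mu>) - U p \<mu>\<bar> \<le> ereal (\<epsilon> * depth s)"
      by (rule payoff_error_le_depth)
    also have "\<dots> \<le> ereal (\<epsilon> * depth T)"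
      using depth_sub[OF \<open>sub T p = Some s\<close>] eps_nonneg by (simp add: mult_left_mono)
    finally show "\<bar>ereal (Q p \<mu>) - U p \<mu>\<bar> \<le> ereal (\<epsilon> * real (depth T))" .
  qed
qed

end
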